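(* Let $R$ be a noncommutative division algebra over a field $F$, let $n\geq 2$ be an integer, and let $p\in F[x]$ be a nonconstant polynomial. Then there exist $A,B\in\mathrm{M}_n(R)$ such that $\mathrm{trace}\big(p(AB)-p(BA)\big)\neq 0$.
   Context: For a matrix $X\in \mathrm{M}_n(R)$, $\mathrm{trace}(X)$ denotes the sum of its diagonal entries (an element of $R$). *)

theory Defs
  imports "HOL-Computational_Algebra.Polynomial" "Jordan_Normal_Form.Matrix"
begin

definition mat_trace :: "'a::comm_monoid_add mat \<Rightarrow> 'a" where
  "mat_trace A = (\<Sum>i<dim_row A. A $$ (i, i))"

text \<open>An F-algebra structure on the ring R: a unital ring homomorphism
  phi from F into the centre of R.\<close>
definition is_algebra_map :: "('f::field \<Rightarrow> 'r::ring_1) \<Rightarrow> bool" where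
  "is_algebra_map \<phi> \<longleftrightarrow>
     \<phi> 1 = 1 \<and>
     (\<forall>a b. \<phi> (a + b) = \<phi> a + \<phi> b) \<and>
     (\<forall>a b. \<phi> (a * b) = \<phi> a * \<phi> b) \<and>
     (\<forall>a r. \<phi> a * r = r * \<phi> a)"

definition poly_mat :: "('f::field \<Rightarrow> 'r::ring_1) \<Rightarrow> 'f poly \<Rightarrow> 'r mat \<Rightarrow> 'r mat" where
  "poly_mat \<phi> p X =
     foldr (\<lambda>i M. (\<phi> (coeff p i) \<cdot>\<^sub>m (X ^\<^sub>m i)) + M) [0..<Suc (degree p)]
       (0\<^sub>m (dim_row X) (dim_col X))"

end

(*
  Write p = c + X g with g nonzero. If A has first row alpha, B has first column beta and all other
  entries vanish, then AB = s E_11 and BA = beta alpha^T with s = sum_l alpha_l beta_l, so that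
  tr (p(AB) - p(BA)) = g(s) s - sum_l beta_l g(s) alpha_l, which need not vanish when R is not
  commutative. Given x in R with w = g(x) nonzero and noncommuting u, v, the choice alpha = (1, u),
  beta = (x - u v w^-1, v w^-1) yields s = x and the trace u v - v u.

  Such an x exists. For infinite F take x = phi(a) with a not a root of g. For finite F, an identity
  g = 0 on R would make R commutative: by Herstein's lemma some z conjugates a noncentral x into
  F[x] - {x}, and F[x] together with z spans a finite division subring, which is commutative by
  Wedderburn's little theorem (Witt's proof, via the cyclotomic polynomial).
*)

theory Submission
  imports Defs
    "HOL-Computational_Algebra.Polynomial_Factorial"
    "HOL-Computational_Algebra.Fundamental_Theorem_Algebra"
    "HOL-Algebra.Multiplicative_Group"
    "HOL-Algebra.Group_Action"
begin

section \<open>Cyclotomic polynomials\<close>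

lemma map_poly_of_int_mult:
  "map_poly (of_int :: int \<Rightarrow> 'a::comm_ring_1) (p * q) = map_poly of_int p * map_poly of_int q"
  by (rule poly_eqI) (simp add: coeff_map_poly coeff_mult)

lemma poly_map_poly_of_int:
  "poly (map_poly (of_int :: int \<Rightarrow> 'a::comm_ring_1) p) (of_int x) = of_int (poly p x)"
  by (induction p) (simp_all add: map_poly_pCons)

lemma poly_map_poly_of_int_prod:
  "finite A \<Longrightarrow> poly (map_poly (of_int :: int \<Rightarrow> 'a::comm_ring_1) (\<Prod>d\<in>A. f d)) x =
     (\<Prod>d\<in>A. poly (map_poly of_int (f d)) x)"
  by (induction A rule: finite_induct) (simp_all add: map_poly_of_int_mult)

lemma norm_diff_gt_of_unit:
  fixes r :: complex and q :: real
  assumes "cmod r = 1" "r \<noteq> 1" "q \<ge> 1"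
  shows "cmod (of_real q - r) > q - 1"
proof -
  have "Re r < 1"
  proof (rule ccontr)
    assume "\<not> Re r < 1"
    with abs_Re_le_cmod[of r] assms(1) have "Re r = 1" by simp
    moreover have "(Re r)\<^sup>2 + (Im r)\<^sup>2 = 1" using assms(1) by (simp add: cmod_def)
    ultimately show False using assms(2) by (simp add: complex_eq_iff)
  qed
  moreover have "q - Re r \<le> cmod (of_real q - r)"
    using abs_Re_le_cmod[of "of_real q - r"] by simp
  ultimately show ?thesis by simp
qed

lemma abs_poly_gt_of_roots_on_unit_circle:
  fixes f :: "int poly" and q :: int
  assumes deg: "degree f \<ge> 1" and q: "q \<ge> 2"
    and roots: "\<And>r. poly (map_poly of_int f) r = 0 \<Longrightarrow> cmod r = 1 \<and> r \<noteq> 1"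
  shows "\<bar>poly f q\<bar> > q - 1"
proof -
  define g :: "complex poly" where "g = map_poly of_int f"
  have deg_g: "degree g = degree f" and lc_g: "lead_coeff g = of_int (lead_coeff f)"
    by (simp_all add: g_def degree_map_poly coeff_map_poly)
  obtain r where r: "Polynomial.smult (lead_coeff g) (\<Prod>i<degree g. [:-r i, 1:]) = g"
    using complex_poly_decompose' by blast
  have g_at: "poly g z = lead_coeff g * (\<Prod>i<degree f. z - r i)" for z
    using arg_cong[OF r, of "\<lambda>h. poly h z"] by (simp add: poly_prod deg_g)
  have q_ge: "real_of_int q - 1 \<ge> 1" using q by simp
  have factor_gt: "cmod (of_int q - r i) > real_of_int q - 1" if "i < degree f" for i
  proof -
    have "poly g (r i) = 0"
      unfolding g_at using that by (auto simp: prod_zero_iff)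
    then show ?thesis
      using roots[of "r i"] norm_diff_gt_of_unit[of "r i" q] q by (simp add: g_def)
  qed
  have "real_of_int q - 1 \<le> (real_of_int q - 1) ^ degree f"
    using deg q_ge by (simp add: self_le_power)
  also have "\<dots> = (\<Prod>i<degree f. real_of_int q - 1)" by simp
  also have "\<dots> < (\<Prod>i<degree f. cmod (of_int q - r i))"
    using deg q_ge factor_gt by (intro prod_mono_strict[of 0]) (fastforce intro: less_imp_le)+
  also have "\<dots> \<le> \<bar>real_of_int (lead_coeff f)\<bar> * (\<Prod>i<degree f. cmod (of_int q - r i))"
  proof -
    have "lead_coeff f \<noteq> 0" using deg by auto
    then have "\<bar>real_of_int (lead_coeff f)\<bar> \<ge> 1" by linarith
    moreover have "(\<Prod>i<degree f. cmod (of_int q - r i)) \<ge> 0" by (simp add: prod_nonneg)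
    ultimately show ?thesis by (simp add: mult_le_cancel_right1)
  qed
  also have "\<dots> = cmod (poly g (of_int q))"
    by (simp add: g_at lc_g norm_mult prod_norm)
  also have "\<dots> = \<bar>poly f q\<bar>"
    using poly_map_poly_of_int[of f q, where 'a = complex] by (simp add: g_def)
  finally show ?thesis by simp
qed

definition xpow_minus_one :: "nat \<Rightarrow> int poly" where
  "xpow_minus_one d = Polynomial.monom 1 d - 1"

lemma poly_xpow_minus_one:
  "poly (map_poly (of_int :: int \<Rightarrow> 'a::comm_ring_1) (xpow_minus_one d)) x = x ^ d - 1"
proof -
  have "map_poly (of_int :: int \<Rightarrow> 'a) (xpow_minus_one d) = Polynomial.monom 1 d - 1"
    by (rule poly_eqI) (simp add: coeff_map_poly xpow_minus_one_def coeff_monom)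
  then show ?thesis by (simp add: poly_monom)
qed

lemma poly_xpow_minus_one_int: "poly (xpow_minus_one d) x = x ^ d - 1"
  by (simp add: xpow_minus_one_def poly_monom)

lemma xpow_minus_one_factor:
  "xpow_minus_one n = xpow_minus_one 1 * (\<Sum>i<n. Polynomial.monom 1 1 ^ i)"
  unfolding xpow_minus_one_def using power_diff_1_eq[of "Polynomial.monom (1::int) 1" n]
  by (simp add: monom_power)

lemma xpow_minus_one_dvd: "d dvd n \<Longrightarrow> xpow_minus_one d dvd xpow_minus_one n"
proof -
  assume "d dvd n"
  then obtain k where "n = d * k" by blast
  then have "xpow_minus_one n = Polynomial.monom 1 d ^ k - 1" by (simp add: xpow_minus_one_def monom_power)
  also have "\<dots> = (Polynomial.monom 1 d - 1) * (\<Sum>i<k. Polynomial.monom 1 d ^ i)" by (rule power_diff_1_eq)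
  finally show ?thesis by (simp add: xpow_minus_one_def)
qed

lemma xpow_minus_one_nonzero: "n \<ge> 1 \<Longrightarrow> xpow_minus_one n \<noteq> 0"
  using poly_xpow_minus_one_int[of n 2] by (auto simp: self_le_power[of "2::int" n] dest: arg_cong[of _ _ "\<lambda>p. poly p 2"])

definition proper_divisors_lcm :: "nat \<Rightarrow> int poly" where
  "proper_divisors_lcm n = Lcm (xpow_minus_one ` {d. d dvd n \<and> d < n})"

text \<open>This quotient is the \<open>n\<close>-th cyclotomic polynomial \<open>\<Phi>\<^sub>n\<close>; describing it so avoids
  primitive roots of unity.\<close>
definition cyclotomic :: "nat \<Rightarrow> int poly" where
  "cyclotomic n = xpow_minus_one n div proper_divisors_lcm n"

lemma xpow_minus_one_dvd_proper_divisors_lcm: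
  "d dvd n \<Longrightarrow> d < n \<Longrightarrow> xpow_minus_one d dvd proper_divisors_lcm n"
  unfolding proper_divisors_lcm_def by (rule dvd_Lcm) simp

lemma cyclotomic_mult_lcm: "cyclotomic n * proper_divisors_lcm n = xpow_minus_one n"
proof -
  have "proper_divisors_lcm n dvd xpow_minus_one n"
    unfolding proper_divisors_lcm_def by (rule Lcm_least) (auto intro: xpow_minus_one_dvd)
  then show ?thesis by (simp add: cyclotomic_def)
qed

lemma poly_cyclotomic_one_nonzero:
  assumes "n \<ge> 2"
  shows "poly (cyclotomic n) 1 \<noteq> 0"
proof -
  obtain L where L: "proper_divisors_lcm n = xpow_minus_one 1 * L"
    using xpow_minus_one_dvd_proper_divisors_lcm[of 1 n] assms by auto
  have "xpow_minus_one 1 * (cyclotomic n * L) = xpow_minus_one 1 * (\<Sum>i<n. Polynomial.monom 1 1 ^ i)"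
    using cyclotomic_mult_lcm[of n] by (simp add: L xpow_minus_one_factor[of n] ac_simps)
  then have "cyclotomic n * L = (\<Sum>i<n. Polynomial.monom 1 1 ^ i)"
    using xpow_minus_one_nonzero[of 1] by simp
  from arg_cong[OF this, of "\<lambda>p. poly p 1"] show ?thesis
    using assms by (auto simp: poly_sum poly_monom)
qed

lemma roots_cyclotomic:
  assumes "n \<ge> 2" "poly (map_poly of_int (cyclotomic n)) r = 0"
  shows "cmod r = 1 \<and> r \<noteq> 1"
proof
  have "poly (map_poly of_int (xpow_minus_one n)) r = 0"
    using assms(2) by (simp flip: cyclotomic_mult_lcm add: map_poly_of_int_mult)
  then have "cmod r ^ n = 1"
    by (simp add: poly_xpow_minus_one flip: norm_power)
  then show "cmod r = 1"
    using assms(1) power_eq_iff_eq_base[of n "cmod r" 1] by simp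
  show "r \<noteq> 1"
    using assms poly_cyclotomic_one_nonzero[OF assms(1)]
      poly_map_poly_of_int[of "cyclotomic n" 1, where 'a = complex] by auto
qed

lemma cis_power_ne_one:
  fixes d n :: nat
  assumes "0 < d" "d < n"
  shows "cis (2 * pi / n) ^ d \<noteq> 1"
proof
  assume "cis (2 * pi / n) ^ d = 1"
  then have "cis (2 * pi * real d / real n) = cis (2 * pi * real 0 / real n)"
    by (simp add: DeMoivre mult_ac)
  moreover have "inj_on (\<lambda>k. cis (2 * pi * real k / real n)) {..<n}"
    using bij_betw_roots_unity[of n] assms by (simp add: bij_betw_def)
  ultimately have "d = 0"
    using assms by (elim inj_onD) auto
  then show False using assms by simp
qed

text \<open>A primitive \<open>n\<close>-th root of unity is a root of \<open>X\<^sup>n - 1\<close> but of no \<open>X\<^sup>d - 1\<close> with \<open>d\<close> a proper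
  divisor of \<open>n\<close>, hence a root of \<open>\<Phi>\<^sub>n\<close>.\<close>
lemma degree_cyclotomic:
  assumes "n \<ge> 2"
  shows "degree (cyclotomic n) \<ge> 1"
proof (rule ccontr)
  define Ds where "Ds = {d. d dvd n \<and> d < n}"
  define z :: complex where "z = cis (2 * pi / n)"
  have Ds: "finite Ds" "\<And>d. d \<in> Ds \<Longrightarrow> 0 < d \<and> d < n"
    using assms by (auto simp: Ds_def intro: Nat.gr0I)
  assume "\<not> degree (cyclotomic n) \<ge> 1"
  then obtain c where c: "cyclotomic n = [:c:]"
    by (metis degree_eq_zeroE less_one not_le)
  have "proper_divisors_lcm n dvd (\<Prod>d\<in>Ds. xpow_minus_one d)"
    unfolding proper_divisors_lcm_def Ds_def[symmetric] by (rule Lcm_least) (auto intro: dvd_prodI Ds)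
  then obtain M where M: "(\<Prod>d\<in>Ds. xpow_minus_one d) = proper_divisors_lcm n * M"
    by blast
  have "poly (map_poly of_int (cyclotomic n)) z * poly (map_poly of_int (proper_divisors_lcm n)) z = 0"
    using arg_cong[OF cyclotomic_mult_lcm[of n], of "\<lambda>f. poly (map_poly of_int f) z"] assms
    by (simp add: map_poly_of_int_mult poly_xpow_minus_one z_def DeMoivre)
  moreover have "c \<noteq> 0"
    using cyclotomic_mult_lcm[of n] xpow_minus_one_nonzero[of n] assms c by auto
  ultimately have "(\<Prod>d\<in>Ds. z ^ d - 1) = 0"
    using arg_cong[OF M, of "\<lambda>f. poly (map_poly of_int f) z"] Ds(1)
    by (simp add: c map_poly_pCons map_poly_of_int_mult poly_map_poly_of_int_prod poly_xpow_minus_one)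
  then show False
    using Ds cis_power_ne_one[of _ n] by (auto simp: z_def)
qed

lemma abs_poly_cyclotomic_gt:
  fixes q :: int
  assumes "n \<ge> 2" "q \<ge> 2"
  shows "\<bar>poly (cyclotomic n) q\<bar> > q - 1"
  using abs_poly_gt_of_roots_on_unit_circle[OF degree_cyclotomic[OF assms(1)] assms(2)]
    roots_cyclotomic[OF assms(1)] by blast

lemma poly_cyclotomic_dvd: "poly (cyclotomic n) q dvd q ^ n - 1"
proof -
  have "q ^ n - 1 = poly (cyclotomic n) q * poly (proper_divisors_lcm n) q"
    using arg_cong[OF cyclotomic_mult_lcm[of n], of "\<lambda>f. poly f q"]
    by (simp add: poly_xpow_minus_one_int)
  then show ?thesis by (rule dvdI)
qed

lemma poly_cyclotomic_dvd_cofactor: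
  fixes q :: int
  assumes d: "d dvd n" "d < n" "0 < d" and q: "q \<ge> 2" and T: "T * (q ^ d - 1) = q ^ n - 1"
  shows "poly (cyclotomic n) q dvd T"
proof -
  obtain R where R: "proper_divisors_lcm n = xpow_minus_one d * R"
    using xpow_minus_one_dvd_proper_divisors_lcm[OF d(1,2)] by blast
  have "q ^ d \<ge> q ^ 1"
    using d(3) q by (intro power_increasing) auto
  then have "q ^ d - 1 \<noteq> 0" using q by simp
  moreover have "T * (q ^ d - 1) = (poly (cyclotomic n) q * poly R q) * (q ^ d - 1)"
    using arg_cong[OF cyclotomic_mult_lcm[of n], of "\<lambda>f. poly f q"] T
    by (simp add: R poly_xpow_minus_one_int ac_simps)
  ultimately have "T = poly (cyclotomic n) q * poly R q" by simp
  then show ?thesis by simp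
qed

section \<open>Wedderburn's little theorem\<close>

definition is_subring :: "'a::ring_1 set \<Rightarrow> bool" where
  "is_subring S \<longleftrightarrow>
     0 \<in> S \<and> 1 \<in> S \<and> (\<forall>x\<in>S. \<forall>y\<in>S. x + y \<in> S \<and> x * y \<in> S) \<and> (\<forall>x\<in>S. - x \<in> S)"

lemma
  assumes "is_subring S"
  shows subring_zero: "0 \<in> S" and subring_one: "1 \<in> S"
    and subring_add: "x \<in> S \<Longrightarrow> y \<in> S \<Longrightarrow> x + y \<in> S"
    and subring_mult: "x \<in> S \<Longrightarrow> y \<in> S \<Longrightarrow> x * y \<in> S"
    and subring_uminus: "x \<in> S \<Longrightarrow> - x \<in> S"
    and subring_diff: "x \<in> S \<Longrightarrow> y \<in> S \<Longrightarrow> x - y \<in> S"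
proof -
  show "0 \<in> S" "1 \<in> S" "x \<in> S \<Longrightarrow> y \<in> S \<Longrightarrow> x + y \<in> S" "x \<in> S \<Longrightarrow> y \<in> S \<Longrightarrow> x * y \<in> S"
    "x \<in> S \<Longrightarrow> - x \<in> S"
    using assms unfolding is_subring_def by auto
  show "x \<in> S \<Longrightarrow> y \<in> S \<Longrightarrow> x - y \<in> S"
    using assms unfolding is_subring_def diff_conv_add_uminus by blast
qed

lemma card_subring_ge_two:
  fixes S :: "'a::ring_1 set"
  assumes "is_subring S" "finite S"
  shows "card S \<ge> 2"
proof -
  have "card {0, 1 :: 'a} \<le> card S"
    using assms by (intro card_mono) (auto simp: subring_zero subring_one)
  then show ?thesis by simp
qed

lemma subring_inverse:
  fixes S :: "'a::division_ring set"
  assumes S: "is_subring S" "finite S" and x: "x \<in> S"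
  shows "inverse x \<in> S"
proof (cases "x = 0")
  case True
  then show ?thesis using subring_zero[OF S(1)] by simp
next
  case False
  have "(\<lambda>y. x * y) ` S = S"
    using False x S by (intro endo_inj_surj) (auto intro: inj_onI subring_mult)
  then obtain y where "y \<in> S" "x * y = 1"
    using subring_one[OF S(1)] by (metis imageE)
  then show ?thesis
    using inverse_unique[of x y] by simp
qed

definition centralizer :: "'a::ring_1 set \<Rightarrow> 'a set \<Rightarrow> 'a set" where
  "centralizer S X = {s \<in> S. \<forall>x\<in>X. s * x = x * s}"

lemma subring_centralizer:
  assumes S: "is_subring S"
  shows "is_subring (centralizer S X)"
  unfolding is_subring_def
proof (intro conjI ballI)
  fix a b assume a: "a \<in> centralizer S X" and b: "b \<in> centralizer S X"
  show "a + b \<in> centralizer S X"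
    using a b S by (auto simp: centralizer_def distrib_left distrib_right intro: subring_add)
  have "a * b * x = x * (a * b)" if "x \<in> X" for x
  proof -
    have "a * x = x * a" "b * x = x * b"
      using a b that by (auto simp: centralizer_def)
    have "a * b * x = (a * x) * b" unfolding mult.assoc \<open>b * x = x * b\<close> ..
    also have "\<dots> = x * (a * b)" unfolding \<open>a * x = x * a\<close> by (simp add: mult.assoc)
    finally show ?thesis .
  qed
  then show "a * b \<in> centralizer S X"
    using a b S by (auto simp: centralizer_def intro: subring_mult)
next
  fix a assume "a \<in> centralizer S X"
  then show "- a \<in> centralizer S X"
    using S by (auto simp: centralizer_def intro: subring_uminus)
next
  show "0 \<in> centralizer S X" "1 \<in> centralizer S X"
    using S by (simp_all add: centralizer_def subring_zero subring_one)
qed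

definition submodule_over :: "'a::ring_1 set \<Rightarrow> 'a set \<Rightarrow> bool" where
  "submodule_over T V \<longleftrightarrow> 0 \<in> V \<and> (\<forall>u\<in>V. \<forall>v\<in>V. u + v \<in> V) \<and> (\<forall>t\<in>T. \<forall>v\<in>V. t * v \<in> V)"

lemma submodule_over_subring:
  "is_subring S \<Longrightarrow> T \<subseteq> S \<Longrightarrow> submodule_over T S"
  unfolding submodule_over_def by (auto intro: subring_zero subring_add subring_mult)

lemma submodule_diff:
  assumes "is_subring T" "submodule_over T W" "u \<in> W" "w \<in> W"
  shows "u - w \<in> W"
proof -
  have "(- 1) * w \<in> W"
    using assms subring_one subring_uminus unfolding submodule_over_def by blast
  then have "u + (- 1) * w \<in> W"
    using assms unfolding submodule_over_def by blast
  then show ?thesis by simp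
qed

lemma inj_on_submodule_adjoin:
  fixes T W :: "'a::division_ring set"
  assumes T: "is_subring T" "finite T" and W: "submodule_over T W" and v: "v \<notin> W"
  shows "inj_on (\<lambda>(w, t). w + t * v) (W \<times> T)"
proof (rule inj_onI, clarify)
  fix w t w' t' assume wt: "w \<in> W" "t \<in> T" "w' \<in> W" "t' \<in> T" and eq: "w + t * v = w' + t' * v"
  have "t = t'"
  proof (rule ccontr)
    assume "t \<noteq> t'"
    have "inverse (t - t') \<in> T"
      using wt T by (intro subring_inverse subring_diff) auto
    then have "inverse (t - t') * (w' - w) \<in> W"
      using wt W submodule_diff[OF T(1) W] unfolding submodule_over_def by blast
    moreover have "w' - w = (t - t') * v"
      using eq by (simp add: algebra_simps)
    ultimately have "inverse (t - t') * (t - t') * v \<in> W"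
      by (simp add: mult.assoc)
    then show False
      using v \<open>t \<noteq> t'\<close> by simp
  qed
  then show "w = w' \<and> t = t'" using eq by simp
qed

lemma submodule_adjoin:
  fixes T W :: "'a::division_ring set"
  assumes T: "is_subring T" "finite T" and W: "submodule_over T W" and v: "v \<notin> W"
  defines "W' \<equiv> (\<lambda>(w, t). w + t * v) ` (W \<times> T)"
  shows "submodule_over T W'" "insert v W \<subseteq> W'" "card W' = card W * card T"
proof -
  have W_closed: "0 \<in> W" "\<And>u w. u \<in> W \<Longrightarrow> w \<in> W \<Longrightarrow> u + w \<in> W"
    "\<And>t w. t \<in> T \<Longrightarrow> w \<in> W \<Longrightarrow> t * w \<in> W"
    using W unfolding submodule_over_def by auto
  show "card W' = card W * card T"
    unfolding W'_def using inj_on_submodule_adjoin[OF T W v]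
    by (simp add: card_image card_cartesian_product)
  have "(\<lambda>(w, t). w + t * v) (0, 1) \<in> W'" "(\<lambda>(w, t). w + t * v) (w, 0) \<in> W'" if "w \<in> W" for w
    unfolding W'_def using that W_closed(1) subring_zero[OF T(1)] subring_one[OF T(1)] by blast+
  then show "insert v W \<subseteq> W'"
    using W_closed(1) by auto
  show "submodule_over T W'"
    unfolding submodule_over_def
  proof (intro conjI ballI)
    show "0 \<in> W'" using \<open>insert v W \<subseteq> W'\<close> W_closed(1) by blast
    fix u u' assume "u \<in> W'" "u' \<in> W'"
    then obtain w t w' t' where wt: "w \<in> W" "t \<in> T" "w' \<in> W" "t' \<in> T"
      and u: "u = w + t * v" "u' = w' + t' * v"
      unfolding W'_def by auto
    have "u + u' = (\<lambda>(w, t). w + t * v) (w + w', t + t')"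
      unfolding u by (simp add: algebra_simps)
    then show "u + u' \<in> W'"
      unfolding W'_def using wt W_closed(2) subring_add[OF T(1)] by auto
  next
    fix s u assume s: "s \<in> T" and "u \<in> W'"
    then obtain w t where wt: "w \<in> W" "t \<in> T" and u: "u = w + t * v"
      unfolding W'_def by auto
    have "s * u = (\<lambda>(w, t). w + t * v) (s * w, s * t)"
      unfolding u by (simp add: algebra_simps)
    then show "s * u \<in> W'"
      unfolding W'_def using s wt W_closed(3) subring_mult[OF T(1)] by auto
  qed
qed

lemma card_submodule_eq_mult_power:
  fixes T V W :: "'a::division_ring set"
  assumes T: "is_subring T" "finite T" and V: "submodule_over T V" "finite V"
    and W: "submodule_over T W" "W \<subseteq> V"
  shows "\<exists>k. card V = card W * card T ^ k"
  using W
proof (induction W rule: measure_induct_rule[where f = "\<lambda>W. card V - card W"])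
  case (less W)
  show ?case
  proof (cases "W = V")
    case True
    then show ?thesis by (intro exI[of _ 0]) simp
  next
    case False
    then obtain v where v: "v \<in> V" "v \<notin> W" using less.prems(2) by blast
    define W' where "W' = (\<lambda>(w, t). w + t * v) ` (W \<times> T)"
    note W' = submodule_adjoin[OF T less.prems(1) v(2), folded W'_def]
    have "W' \<subseteq> V"
    proof
      fix u assume "u \<in> W'"
      then obtain w t where "w \<in> W" "t \<in> T" "u = w + t * v"
        unfolding W'_def by auto
      then show "u \<in> V"
        using less.prems(2) v(1) V(1) unfolding submodule_over_def by blast
    qed
    moreover have "W \<subset> W'"
      using W'(2) v(2) by blast
    moreover have "finite W'"
      using \<open>W' \<subseteq> V\<close> V(2) by (rule finite_subset)
    ultimately have "card W < card W'" "card W' \<le> card V"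
      using V(2) by (simp_all add: psubset_card_mono card_mono)
    then have "card V - card W' < card V - card W" by linarith
    then obtain k where "card V = card W' * card T ^ k"
      using less.IH[OF _ W'(1) \<open>W' \<subseteq> V\<close>] by blast
    then show ?thesis
      using W'(3) by (intro exI[of _ "Suc k"]) simp
  qed
qed

lemma card_submodule_power:
  fixes T V :: "'a::division_ring set"
  assumes T: "is_subring T" "finite T" and V: "submodule_over T V" "finite V"
  obtains k where "card V = card T ^ k"
proof -
  have "submodule_over T {0}" "{0} \<subseteq> V"
    using V(1) by (simp_all add: submodule_over_def)
  then obtain k where "card V = card {0 :: 'a} * card T ^ k"
    using card_submodule_eq_mult_power[OF T V] by blast
  then show thesis
    using that by simp
qed

definition ring_of :: "'a::ring_1 set \<Rightarrow> 'a ring" where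
  "ring_of S = \<lparr>carrier = S, mult = (*), one = 1, zero = 0, add = (+)\<rparr>"

lemma ring_of_simps [simp]:
  "carrier (ring_of S) = S" "\<zero>\<^bsub>ring_of S\<^esub> = 0" "\<one>\<^bsub>ring_of S\<^esub> = 1"
  "x \<otimes>\<^bsub>ring_of S\<^esub> y = x * y" "x \<oplus>\<^bsub>ring_of S\<^esub> y = x + y"
  by (simp_all add: ring_of_def)

lemma group_mult_of_ring_of:
  fixes S :: "'a::division_ring set"
  assumes S: "is_subring S" "finite S"
  shows "group (mult_of (ring_of S))"
proof (rule groupI)
  fix x assume "x \<in> carrier (mult_of (ring_of S))"
  then have "inverse x \<in> carrier (mult_of (ring_of S))" "inverse x * x = 1"
    using subring_inverse[OF S] by auto
  then show "\<exists>y\<in>carrier (mult_of (ring_of S)). y \<otimes>\<^bsub>mult_of (ring_of S)\<^esub> x = \<one>\<^bsub>mult_of (ring_of S)\<^esub>"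
    by (intro bexI[of _ "inverse x"]) auto
qed (use S in \<open>auto simp: mult.assoc subring_one subring_mult\<close>)

lemma inv_mult_of_ring_of:
  fixes S :: "'a::division_ring set"
  assumes S: "is_subring S" "finite S" and g: "g \<in> S - {0}"
  shows "inv\<^bsub>mult_of (ring_of S)\<^esub> g = inverse g"
  using g subring_inverse[OF S, of g]
  by (intro group.inv_equality[OF group_mult_of_ring_of[OF S]]) auto

definition conj_class :: "'a::division_ring set \<Rightarrow> 'a \<Rightarrow> 'a set" where
  "conj_class S x = (\<lambda>g. g * x * inverse g) ` (S - {0})"

lemma conj_eq_self_if_central:
  fixes S :: "'a::division_ring set"
  assumes "g \<in> S" "g \<noteq> 0" "x \<in> S"
    and "x \<in> centralizer S S \<or> g * x * inverse g \<in> centralizer S S"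
  shows "g * x * inverse g = x"
  using assms(4)
proof
  assume "x \<in> centralizer S S"
  then have "g * x = x * g" using assms(1) by (auto simp: centralizer_def)
  then show ?thesis using assms(2) by (simp add: mult.assoc)
next
  assume "g * x * inverse g \<in> centralizer S S"
  then have "g * (g * x * inverse g) = (g * x * inverse g) * g"
    using assms(1) by (auto simp: centralizer_def)
  also have "\<dots> = g * x" using assms(2) by (simp add: mult.assoc)
  finally show ?thesis using assms(2) by simp
qed

context
  fixes S :: "'a::division_ring set"
  assumes S: "is_subring S" "finite S"
begin

private abbreviation G where "G \<equiv> mult_of (ring_of S)"

private abbreviation conj where "conj \<equiv> \<lambda>g. \<lambda>h\<in>carrier G. g \<otimes>\<^bsub>G\<^esub> h \<otimes>\<^bsub>G\<^esub> inv\<^bsub>G\<^esub> g"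

private lemma conjugation_action: "group_action G (carrier G) conj"
  by (rule group.action_by_conjugation[OF group_mult_of_ring_of[OF S]])

private lemma conj_apply: "g \<in> S - {0} \<Longrightarrow> h \<in> S - {0} \<Longrightarrow> conj g h = g * h * inverse g"
  by (simp add: inv_mult_of_ring_of[OF S])

private lemma orbit_conj:
  assumes "x \<in> S - {0}"
  shows "orbit G conj x = conj_class S x"
proof -
  have "orbit G conj x = (\<lambda>g. conj g x) ` (S - {0})"
    unfolding orbit_def by auto
  also have "\<dots> = conj_class S x"
    unfolding conj_class_def using conj_apply assms by (intro image_cong) auto
  finally show ?thesis .
qed

lemma card_conj_class:
  assumes x: "x \<in> S - {0}"
  shows "card (conj_class S x) * card (centralizer S {x} - {0}) = card S - 1"
proof -
  have "stabilizer G conj x = centralizer S {x} - {0}"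
  proof -
    have "g * x * inverse g = x \<longleftrightarrow> g * x = x * g" if "g \<noteq> 0" for g
    proof
      assume "g * x * inverse g = x"
      then have "g * x * inverse g * g = x * g" by simp
      then show "g * x = x * g" using that by (simp add: mult.assoc)
    next
      assume "g * x = x * g"
      then show "g * x * inverse g = x" using that by (simp add: mult.assoc)
    qed
    then show ?thesis
      unfolding stabilizer_def centralizer_def using x conj_apply by (auto simp: mult.assoc)
  qed
  moreover have "order G = card S - 1"
    using S subring_zero[OF S(1)] by (simp add: order_def card_Diff_singleton)
  ultimately show ?thesis
    using group_action.orbit_stabilizer_theorem[OF conjugation_action, of x] x orbit_conj by simp
qed

lemma dvd_card_noncentral:
  fixes P :: "'b::comm_semiring_1"
  assumes "\<And>x. x \<in> S - centralizer S S \<Longrightarrow> P dvd of_nat (card (conj_class S x))"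
  shows "P dvd of_nat (card (S - centralizer S S))"
proof -
  define f where "f y = (if y \<in> centralizer S S then 0 else 1 :: 'b)" for y
  have "(\<Sum>y\<in>orb. f y) = f x * of_nat (card orb)" if "x \<in> S - {0}" "orb = conj_class S x" for x orb
  proof -
    have "f y = f x" if "y \<in> conj_class S x" for y
    proof -
      obtain g where "g \<in> S - {0}" "y = g * x * inverse g"
        using \<open>y \<in> conj_class S x\<close> unfolding conj_class_def by blast
      then have "x \<in> centralizer S S \<or> y \<in> centralizer S S \<Longrightarrow> y = x"
        using conj_eq_self_if_central[of g S x] \<open>x \<in> S - {0}\<close> by auto
      then show ?thesis unfolding f_def by auto
    qed
    then show ?thesis using \<open>orb = conj_class S x\<close> by (simp add: mult.commute)
  qed
  then have "P dvd (\<Sum>y\<in>orb. f y)" if "orb \<in> orbits G (carrier G) conj" for orb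
    using that assms orbit_conj unfolding orbits_def f_def by auto
  then have "P dvd (\<Sum>orb\<in>orbits G (carrier G) conj. \<Sum>y\<in>orb. f y)"
    by (rule dvd_sum)
  then have "P dvd (\<Sum>y\<in>S - {0}. f y)"
    using group_action.disjoint_sum[OF conjugation_action, of f] S(2) by simp
  moreover have "(\<Sum>y\<in>S - {0}. f y) = of_nat (card (S - centralizer S S))"
  proof -
    have "0 \<in> centralizer S S" by (simp add: centralizer_def subring_zero[OF S(1)])
    then have "S - centralizer S S = (S - {0}) \<inter> - centralizer S S" by auto
    then show ?thesis using S(2) by (simp add: f_def sum.If_cases)
  qed
  ultimately show ?thesis by simp
qed

end

lemma card_centralizer_exponent:
  fixes S :: "'a::division_ring set"
  assumes S: "is_subring S" "finite S"
    and n: "card S = card (centralizer S S) ^ n" and x: "x \<in> S - centralizer S S"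
  obtains d where "0 < d" "d < n" "d dvd n" "card (centralizer S {x}) = card (centralizer S S) ^ d"
proof -
  let ?Z = "centralizer S S" and ?C = "centralizer S {x}"
  have sub: "?Z \<subseteq> ?C" "?C \<subseteq> S"
    using x by (auto simp: centralizer_def)
  have Z: "is_subring ?Z" "finite ?Z" and C: "is_subring ?C" "finite ?C"
    using S subring_centralizer sub finite_subset[OF _ S(2)] by auto
  obtain d where d: "card ?C = card ?Z ^ d"
    using card_submodule_power[OF Z submodule_over_subring[OF C(1) sub(1)] C(2)] .
  obtain e where e: "card S = card ?C ^ e"
    using card_submodule_power[OF C submodule_over_subring[OF S(1) sub(2)] S(2)] .
  have q: "card ?Z \<ge> 2"
    using card_subring_ge_two[OF Z] .
  have "card ?Z ^ n = card ?Z ^ (d * e)"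
    using n e d by (simp add: power_mult)
  then have "n = d * e"
    using q by (simp add: power_inject_exp)
  obtain s where "s \<in> S" "x * s \<noteq> s * x"
    using x unfolding centralizer_def by blast
  then have "s \<notin> ?C"
    by (auto simp: centralizer_def)
  then have "?C \<subset> S"
    using sub(2) \<open>s \<in> S\<close> by blast
  then have "card ?Z ^ d < card ?Z ^ n"
    using psubset_card_mono[OF S(2), of ?C] d n by simp
  then have "d < n"
    using q by (simp add: power_strict_increasing_iff)
  moreover have "d \<noteq> 0"
    using card_subring_ge_two[OF C] d by (cases d) auto
  ultimately show thesis
    using that[of d] d \<open>n = d * e\<close> by simp
qed

lemma card_conj_class_eq:
  fixes S :: "'a::division_ring set"
  assumes S: "is_subring S" "finite S"
    and n: "card S = card (centralizer S S) ^ n" and z: "z \<in> S - centralizer S S"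
  obtains d where "0 < d" "d < n" "d dvd n"
    "int (card (conj_class S z)) * (int (card (centralizer S S)) ^ d - 1)
      = int (card (centralizer S S)) ^ n - 1"
proof -
  let ?q = "card (centralizer S S)"
  obtain d where d: "0 < d" "d < n" "d dvd n" "card (centralizer S {z}) = ?q ^ d"
    using card_centralizer_exponent[OF S n z] .
  have "0 \<in> centralizer S X" for X
    by (simp add: centralizer_def subring_zero[OF S(1)])
  then have "z \<noteq> 0" "card (centralizer S {z} - {0}) = ?q ^ d - 1"
    using z d(4) finite_subset[OF _ S(2)] by (auto simp: card_Diff_singleton centralizer_def)
  then have "card (conj_class S z) * (?q ^ d - 1) = ?q ^ n - 1"
    using card_conj_class[OF S, of z] z n by simp
  then have "int (card (conj_class S z)) * int (?q ^ d - 1) = int (?q ^ n - 1)"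
    by (simp only: of_nat_mult[symmetric])
  moreover have "finite (centralizer S S)"
    using S(2) by (rule finite_subset[rotated]) (auto simp: centralizer_def)
  then have "?q \<ge> 1"
    using card_subring_ge_two[OF subring_centralizer[OF S(1)]] by fastforce
  then have "int (?q ^ k - 1) = int ?q ^ k - 1" for k
    by (simp add: of_nat_diff)
  ultimately show thesis
    using that[OF d(1-3)] by simp
qed

text \<open>Wedderburn's little theorem, in Witt's proof: with \<open>q\<close> the size of the centre and
  \<open>card S = q\<^sup>n\<close>, the class equation of \<open>S - {0}\<close> makes \<open>\<Phi>\<^sub>n(q)\<close> divide \<open>q - 1\<close>, although
  \<open>|\<Phi>\<^sub>n(q)| > q - 1\<close> once \<open>n \<ge> 2\<close>.\<close>
theorem finite_subring_commute:
  fixes S :: "'a::division_ring set"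
  assumes S: "is_subring S" "finite S" and xy: "x \<in> S" "y \<in> S"
  shows "x * y = y * x"
proof (rule ccontr)
  let ?Z = "centralizer S S"
  define q where "q = card ?Z"
  have Z: "is_subring ?Z" "finite ?Z" "?Z \<subseteq> S"
    using S subring_centralizer by (auto simp: centralizer_def)
  have q: "q \<ge> 2"
    unfolding q_def using card_subring_ge_two[OF Z(1,2)] .
  obtain n where n: "card S = q ^ n"
    unfolding q_def using card_submodule_power[OF Z(1,2) submodule_over_subring[OF S(1) Z(3)] S(2)] .
  assume "x * y \<noteq> y * x"
  then have "x \<in> S - ?Z"
    using xy unfolding centralizer_def by blast
  then obtain d0 where "0 < d0" "d0 < n"
    using card_conj_class_eq[OF S n[unfolded q_def]] by blast
  then have "n \<ge> 2" by simp
  define P where "P = poly (cyclotomic n) (int q)"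
  have "P dvd of_nat (card (conj_class S z))" if z: "z \<in> S - ?Z" for z
  proof -
    obtain d where "0 < d" "d < n" "d dvd n" "int (card (conj_class S z)) * (int q ^ d - 1) = int q ^ n - 1"
      using card_conj_class_eq[OF S n[unfolded q_def] z] unfolding q_def by blast
    then show ?thesis
      unfolding P_def using q by (intro poly_cyclotomic_dvd_cofactor) auto
  qed
  then have "P dvd of_nat (card (S - ?Z))"
    by (rule dvd_card_noncentral[OF S])
  moreover have "card (S - ?Z) = q ^ n - q"
    using Z(2,3) n by (simp add: card_Diff_subset q_def)
  moreover have "q ^ n \<ge> q"
    using q \<open>n \<ge> 2\<close> by (simp add: power_increasing[of 1 n q, simplified])
  ultimately have "P dvd int q ^ n - int q"
    by (simp add: of_nat_diff)
  then have "P dvd (int q ^ n - 1) - (int q ^ n - int q)"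
    using poly_cyclotomic_dvd[of n "int q"] unfolding P_def by (rule dvd_diff[rotated])
  then have "\<bar>P\<bar> dvd int q - 1" by simp
  then have "\<bar>P\<bar> \<le> int q - 1"
    using q by (intro zdvd_imp_le) auto
  then show False
    using abs_poly_cyclotomic_gt[OF \<open>n \<ge> 2\<close>, of "int q"] q by (simp add: P_def)
qed

section \<open>Power sums and Herstein's lemma\<close>

lemma nat_pow_ring_of: "x [^]\<^bsub>ring_of S\<^esub> (n::nat) = x ^ n"
  by (induction n) (simp_all add: ring_of_def power_commutes)

context
  fixes K :: "'a::division_ring set"
  assumes K: "is_subring K" "finite K"
begin

lemma field_ring_of: "field (ring_of K)"
proof -
  have "abelian_group (ring_of K)"
    using K(1) by (intro abelian_groupI)
      (auto simp: add.assoc add.commute subring_zero subring_add intro: bexI[of _ "- _"] subring_uminus)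
  moreover have "comm_monoid (ring_of K)"
    using K by (intro comm_monoidI)
      (auto simp: mult.assoc subring_one subring_mult intro: finite_subring_commute)
  ultimately have "cring (ring_of K)"
    by (intro cringI) (simp_all add: distrib_right)
  then show ?thesis
  proof (rule cring.cring_fieldI2)
    fix x assume "x \<in> carrier (ring_of K)" "x \<noteq> \<zero>\<^bsub>ring_of K\<^esub>"
    then show "\<exists>y\<in>carrier (ring_of K). x \<otimes>\<^bsub>ring_of K\<^esub> y = \<one>\<^bsub>ring_of K\<^esub>"
      using subring_inverse[OF K] by (intro bexI[of _ "inverse x"]) auto
  qed simp
qed

lemma power_card_minus_one:
  assumes "c \<in> K" "c \<noteq> 0"
  shows "c ^ (card K - 1) = 1"
proof -
  interpret G: group "mult_of (ring_of K)"
    by (rule group_mult_of_ring_of[OF K])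
  have "order (mult_of (ring_of K)) = card K - 1"
    using K subring_zero[OF K(1)] by (simp add: order_def card_Diff_singleton)
  then show ?thesis
    using G.pow_order_eq_1[of c] assms by (simp add: nat_pow_mult_of nat_pow_ring_of)
qed

lemma power_card_subring: "c \<in> K \<Longrightarrow> c ^ card K = c"
proof (cases "c = 0")
  case False
  assume "c \<in> K"
  have "c ^ card K = c ^ (card K - 1) * c"
    using card_subring_ge_two[OF K] by (simp flip: power_Suc2)
  then show ?thesis
    using power_card_minus_one[OF \<open>c \<in> K\<close> False] by simp
qed (use card_subring_ge_two[OF K] in simp)

lemma exists_power_ne_one:
  assumes "0 < i" "i < card K - 1"
  obtains g where "g \<in> K" "g \<noteq> 0" "g ^ i \<noteq> 1"
proof -
  interpret F: field "ring_of K"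
    by (rule field_ring_of)
  have "card {x \<in> K. x ^ i = 1} \<le> i"
    using F.num_roots_le_deg[of i] K(2) assms(1) by (simp add: nat_pow_ring_of)
  then have "\<not> K - {0} \<subseteq> {x \<in> K. x ^ i = 1}"
    using assms K(2) subring_zero[OF K(1)] card_mono[of "{x \<in> K. x ^ i = 1}" "K - {0}"]
    by (auto simp: card_Diff_singleton)
  then show thesis using that by blast
qed

lemma of_nat_card_subring: "of_nat (card K) = (0::'a)"
proof -
  have "(\<lambda>c. c + 1) ` K = K"
    using K by (intro endo_inj_surj) (auto intro: subring_add subring_one inj_onI)
  then have "(\<Sum>c\<in>K. c) = (\<Sum>c\<in>K. c + 1)"
    by (metis (no_types, lifting) add_right_imp_eq inj_onI sum.reindex_cong)
  then show ?thesis by (simp add: sum.distrib)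
qed

lemma sum_powers_subring:
  assumes "i < card K"
  shows "(\<Sum>c\<in>K. c ^ i) = (if i = card K - 1 then - 1 else 0)"
proof -
  have two: "card K \<ge> 2" by (rule card_subring_ge_two[OF K])
  consider "i = card K - 1" | "i = 0" | "0 < i" "i < card K - 1"
    using assms by linarith
  then show ?thesis
  proof cases
    case 1
    have "(\<Sum>c\<in>K. c ^ i) = 0 ^ i + (\<Sum>c\<in>K - {0}. c ^ i)"
      using K subring_zero[OF K(1)] by (simp add: sum.remove)
    also have "(\<Sum>c\<in>K - {0}. c ^ i) = of_nat (card K - 1)"
      using 1 power_card_minus_one K subring_zero[OF K(1)] by (simp add: card_Diff_singleton)
    also have "\<dots> = - 1"
      using two of_nat_card_subring by (simp add: of_nat_diff)
    finally show ?thesis using 1 two by simp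
  next
    case 2
    then show ?thesis using two of_nat_card_subring by simp
  next
    case 3
    then obtain g where g: "g \<in> K" "g \<noteq> 0" "g ^ i \<noteq> 1"
      by (rule exists_power_ne_one)
    have "(\<lambda>c. g * c) ` K = K"
      using g K by (intro endo_inj_surj) (auto intro: subring_mult inj_onI)
    then have "(\<Sum>c\<in>K. c ^ i) = (\<Sum>c\<in>K. (g * c) ^ i)"
      using g(2) by (metis (no_types, lifting) inj_onI mult_left_cancel sum.reindex_cong)
    also have "\<dots> = g ^ i * (\<Sum>c\<in>K. c ^ i)"
    proof -
      interpret F: field "ring_of K"
        by (rule field_ring_of)
      show ?thesis
        unfolding sum_distrib_left using g(1) F.nat_pow_distrib
        by (intro sum.cong refl) (simp add: nat_pow_ring_of)
    qed
    finally have "(g ^ i - 1) * (\<Sum>c\<in>K. c ^ i) = 0"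
      by (simp add: algebra_simps)
    then show ?thesis using g(3) 3 by simp
  qed
qed

end

lemma sum_intertwine_telescope:
  fixes a c y :: "'a::ring_1"
  shows "(\<Sum>j<Q. c ^ (Q - 1 - j) * y * a ^ j) * a - c * (\<Sum>j<Q. c ^ (Q - 1 - j) * y * a ^ j)
    = y * a ^ Q - c ^ Q * y"
proof -
  define t where "t j = c ^ (Q - j) * y * a ^ j" for j
  have "(\<Sum>j<Q. c ^ (Q - 1 - j) * y * a ^ j) * a = (\<Sum>j<Q. t (Suc j))"
    unfolding t_def sum_distrib_right by (simp add: mult.assoc power_commutes)
  moreover have "c * (\<Sum>j<Q. c ^ (Q - 1 - j) * y * a ^ j) = (\<Sum>j<Q. t j)"
    unfolding t_def sum_distrib_left
  proof (intro sum.cong refl)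
    fix j assume "j \<in> {..<Q}"
    then have "Q - j = Suc (Q - 1 - j)" by simp
    then have "c * c ^ (Q - 1 - j) = c ^ (Q - j)" by (simp only: power_Suc)
    then show "c * (c ^ (Q - 1 - j) * y * a ^ j) = c ^ (Q - j) * y * a ^ j"
      by (simp add: mult.assoc[symmetric])
  qed
  ultimately have "(\<Sum>j<Q. c ^ (Q - 1 - j) * y * a ^ j) * a - c * (\<Sum>j<Q. c ^ (Q - 1 - j) * y * a ^ j)
    = (\<Sum>j<Q. t (Suc j) - t j)"
    by (simp only: sum_subtractf)
  also have "\<dots> = y * a ^ Q - c ^ Q * y"
    by (simp only: sum_lessThan_telescope) (simp add: t_def)
  finally show ?thesis .
qed

text \<open>Were \<open>z \<mapsto> z a - c z\<close> injective for every \<open>c \<in> K - {a}\<close>, the operators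
  \<open>U\<^sub>c y = \<Sum>\<^sub>j\<^sub><\<^sub>Q c\<^bsup>Q-1-j\<^esup> y a\<^sup>j\<close>, \<open>Q = card K\<close>, would fix every \<open>y\<close>; summing over
  \<open>c \<in> K\<close> with the power sums of \<open>K\<close> then forces \<open>U\<^sub>a = 0\<close>, i.e. \<open>a\<close> is central.\<close>
lemma exists_conjugate_in_finite_subring:
  fixes K :: "'a::division_ring set"
  assumes K: "is_subring K" "finite K" and a: "a \<in> K" and ab: "a * b \<noteq> b * a"
  obtains c z where "c \<in> K" "c \<noteq> a" "z \<noteq> 0" "z * a = c * z"
proof -
  note conj = that
  define Q where "Q = card K"
  define U where "U c y = (\<Sum>j<Q. c ^ (Q - 1 - j) * y * a ^ j)" for c y
  have Q: "Q \<ge> 2" unfolding Q_def by (rule card_subring_ge_two[OF K])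
  have tele: "U c y * a - c * U c y = y * a - c * y" if "c \<in> K" for c y
    using sum_intertwine_telescope[of c Q y a] power_card_subring[OF K that] power_card_subring[OF K a]
    by (simp add: U_def Q_def)
  show thesis
  proof (rule ccontr)
    assume "\<not> thesis"
    then have no_conj: "z = 0" if "c \<in> K" "c \<noteq> a" "z * a = c * z" for c z
      using conj[of c z] that by blast
    have U_id: "U c y = y" if "c \<in> K" "c \<noteq> a" for c y
      using tele[OF that(1), of y] no_conj[OF that, of "U c y - y"] by (simp add: algebra_simps)
    have "U a y = 0" for y
    proof -
      have "- y = (\<Sum>j<Q. (if j = 0 then - y else 0))"
        using Q by simp
      also have "\<dots> = (\<Sum>j<Q. (\<Sum>c\<in>K. c ^ (Q - 1 - j)) * y * a ^ j)"
        using Q sum_powers_subring[OF K, of "Q - 1 - _"] by (intro sum.cong refl) (auto simp: Q_def)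
      also have "\<dots> = (\<Sum>c\<in>K. U c y)"
        unfolding U_def sum_distrib_right by (rule sum.swap[symmetric])
      also have "\<dots> = U a y + (\<Sum>c\<in>K - {a}. y)"
        using K(2) a U_id by (simp add: sum.remove)
      also have "(\<Sum>c\<in>K - {a}. y) = of_nat (Q - 1) * y"
        using K(2) a by (simp add: Q_def card_Diff_singleton)
      also have "of_nat (Q - 1) = (- 1 :: 'a)"
        using Q of_nat_card_subring[OF K] by (simp add: Q_def of_nat_diff)
      finally show ?thesis by simp
    qed
    then have "y * a = a * y" for y
      using tele[OF a, of y] by simp
    then show False using ab by simp
  qed
qed

section \<open>Polynomial identities over a finite field\<close>

locale algebra_map =
  fixes \<phi> :: "'f::field \<Rightarrow> 'r::ring_1"
  assumes is_algebra_map: "is_algebra_map \<phi>"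
begin

lemma
  shows hom_one [simp]: "\<phi> 1 = 1"
    and hom_add [simp]: "\<phi> (a + b) = \<phi> a + \<phi> b"
    and hom_mult [simp]: "\<phi> (a * b) = \<phi> a * \<phi> b"
    and hom_central: "\<phi> a * r = r * \<phi> a"
  using is_algebra_map unfolding is_algebra_map_def by blast+

lemma hom_central_left: "r * (\<phi> a * s) = \<phi> a * (r * s)"
proof -
  have "r * (\<phi> a * s) = (r * \<phi> a) * s" by (simp only: mult.assoc)
  also have "\<dots> = \<phi> a * (r * s)" by (simp only: hom_central[of a r, symmetric] mult.assoc)
  finally show ?thesis .
qed

lemma hom_zero [simp]: "\<phi> 0 = 0"
  using hom_add[of 0 0] by simp

lemma hom_eq_zero_iff [simp]: "\<phi> a = 0 \<longleftrightarrow> a = 0"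
proof
  assume "\<phi> a = 0"
  then have "\<phi> (a * inverse a) = 0" by simp
  then show "a = 0" by (cases "a = 0") simp_all
qed simp

end

definition poly_alg :: "('f::field \<Rightarrow> 'r::ring_1) \<Rightarrow> 'f poly \<Rightarrow> 'r \<Rightarrow> 'r" where
  "poly_alg \<phi> g x = (\<Sum>i\<le>degree g. \<phi> (poly.coeff g i) * x ^ i)"

context algebra_map
begin

lemma poly_alg_bound:
  assumes "degree g < N"
  shows "poly_alg \<phi> g x = (\<Sum>i<N. \<phi> (poly.coeff g i) * x ^ i)"
  unfolding poly_alg_def using assms
  by (intro sum.mono_neutral_left) (auto simp: Polynomial.coeff_eq_0)

lemma poly_alg_0 [simp]: "poly_alg \<phi> 0 x = 0"
  by (simp add: poly_alg_def)

lemma poly_alg_const [simp]: "poly_alg \<phi> [:c:] x = \<phi> c"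
  by (simp add: poly_alg_def)

lemma poly_alg_add: "poly_alg \<phi> (g + h) x = poly_alg \<phi> g x + poly_alg \<phi> h x"
proof -
  define N where "N = Suc (max (degree g) (degree h))"
  have "degree g < N" "degree h < N" "degree (g + h) < N"
    using degree_add_le_max[of g h] by (auto simp: N_def)
  then show ?thesis
    by (simp add: poly_alg_bound distrib_right sum.distrib)
qed

lemma poly_alg_pCons: "poly_alg \<phi> (pCons c g) x = \<phi> c + x * poly_alg \<phi> g x"
proof -
  define N where "N = Suc (degree g)"
  have "poly_alg \<phi> (pCons c g) x = (\<Sum>i<Suc N. \<phi> (poly.coeff (pCons c g) i) * x ^ i)"
    by (rule poly_alg_bound) (simp add: N_def degree_pCons_le le_imp_less_Suc)
  also have "\<dots> = \<phi> c + (\<Sum>i<N. \<phi> (poly.coeff g i) * x ^ Suc i)"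
    by (subst sum.lessThan_Suc_shift) simp
  also have "(\<Sum>i<N. \<phi> (poly.coeff g i) * x ^ Suc i) = x * poly_alg \<phi> g x"
    unfolding poly_alg_bound[of g N, OF lessI[of "degree g", folded N_def]] sum_distrib_left
    by (intro sum.cong refl) (simp add: hom_central_left)
  finally show ?thesis .
qed

lemma poly_alg_smult: "poly_alg \<phi> (Polynomial.smult c g) x = \<phi> c * poly_alg \<phi> g x"
  by (induction g) (simp_all add: poly_alg_pCons distrib_left mult.assoc hom_central_left)

lemma poly_alg_mult: "poly_alg \<phi> (g * h) x = poly_alg \<phi> g x * poly_alg \<phi> h x"
  by (induction g) (simp_all add: poly_alg_pCons poly_alg_add poly_alg_smult distrib_right mult.assoc)

lemma poly_alg_uminus: "poly_alg \<phi> (- g) x = - poly_alg \<phi> g x"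
  using poly_alg_add[of g "- g" x] by (simp add: eq_neg_iff_add_eq_0 add.commute)

lemma poly_alg_X: "poly_alg \<phi> [:0, 1:] x = x"
  by (simp add: poly_alg_pCons)

lemma poly_alg_pcompose: "poly_alg \<phi> (pcompose g h) x = poly_alg \<phi> g (poly_alg \<phi> h x)"
  by (induction g) (simp_all add: pcompose_pCons poly_alg_add poly_alg_mult poly_alg_pCons)

lemma poly_alg_hom: "poly_alg \<phi> g (\<phi> a) = \<phi> (poly g a)"
  by (induction g) (simp_all add: poly_alg_pCons)

lemma poly_alg_intertwine:
  assumes "z * a = c * z"
  shows "z * poly_alg \<phi> g a = poly_alg \<phi> g c * z"
proof (induction g)
  case (pCons b g)
  have "z * (a * poly_alg \<phi> g a) = c * (z * poly_alg \<phi> g a)"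
    using assms by (simp flip: mult.assoc)
  then show ?case
    using pCons hom_central[of b z] by (simp add: poly_alg_pCons distrib_left distrib_right mult.assoc)
qed simp

end

definition adjoin :: "('f::field \<Rightarrow> 'r::ring_1) \<Rightarrow> 'r \<Rightarrow> 'r set" where
  "adjoin \<phi> a = range (\<lambda>g. poly_alg \<phi> g a)"

context algebra_map
begin

lemma subring_adjoin: "is_subring (adjoin \<phi> a)"
proof -
  have "poly_alg \<phi> 0 a \<in> adjoin \<phi> a" "poly_alg \<phi> 1 a \<in> adjoin \<phi> a"
    "poly_alg \<phi> g a + poly_alg \<phi> h a \<in> adjoin \<phi> a"
    "poly_alg \<phi> g a * poly_alg \<phi> h a \<in> adjoin \<phi> a"
    "- poly_alg \<phi> g a \<in> adjoin \<phi> a" for g h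
    unfolding adjoin_def poly_alg_add[symmetric] poly_alg_mult[symmetric] poly_alg_uminus[symmetric]
    by (rule rangeI)+
  then show ?thesis
    unfolding is_subring_def by (auto simp: adjoin_def one_pCons)
qed

lemma mem_adjoin_self: "a \<in> adjoin \<phi> a"
  unfolding adjoin_def using poly_alg_X[of a] by (metis rangeI)

lemma adjoin_intertwine:
  assumes "z * a = c * z" "c \<in> adjoin \<phi> a" "k \<in> adjoin \<phi> a"
  obtains k' where "k' \<in> adjoin \<phi> a" "z * k = k' * z"
proof -
  obtain g h where "k = poly_alg \<phi> g a" "c = poly_alg \<phi> h a"
    using assms(2,3) unfolding adjoin_def by blast
  then have "z * k = poly_alg \<phi> (pcompose g h) a * z"
    using poly_alg_intertwine[OF assms(1)] by (simp add: poly_alg_pcompose)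
  then show thesis
    using that unfolding adjoin_def by blast
qed

lemma finite_adjoin:
  assumes F: "finite (UNIV :: 'f set)" and q: "q \<noteq> 0" "poly_alg \<phi> q a = 0"
  shows "finite (adjoin \<phi> a)"
proof -
  let ?m = "Suc (degree q)"
  have "adjoin \<phi> a \<subseteq> (\<lambda>f. \<Sum>i<?m. \<phi> (f i) * a ^ i) ` (PiE {..<?m} (\<lambda>_. UNIV))"
  proof
    fix x assume "x \<in> adjoin \<phi> a"
    then obtain g where "x = poly_alg \<phi> g a" unfolding adjoin_def by blast
    also have "\<dots> = poly_alg \<phi> (g mod q) a"
      using q(2) poly_alg_add[of "g div q * q" "g mod q" a] by (simp add: poly_alg_mult)
    also have "\<dots> = (\<Sum>i<?m. \<phi> (poly.coeff (g mod q) i) * a ^ i)"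
      using degree_mod_less[OF q(1), of g] by (intro poly_alg_bound) auto
    also have "\<dots> = (\<Sum>i<?m. \<phi> (restrict (poly.coeff (g mod q)) {..<?m} i) * a ^ i)"
      by (intro sum.cong) auto
    finally show "x \<in> (\<lambda>f. \<Sum>i<?m. \<phi> (f i) * a ^ i) ` (PiE {..<?m} (\<lambda>_. UNIV))"
      by (rule image_eqI[where x = "restrict (poly.coeff (g mod q)) {..<?m}"]) simp_all
  qed
  moreover have "finite (PiE {..<?m} (\<lambda>_. UNIV :: 'f set))"
    using F by (intro finite_PiE) auto
  ultimately show ?thesis
    by (rule finite_subset[OF _ finite_imageI])
qed

end

definition skew_span :: "'a::ring_1 set \<Rightarrow> 'a \<Rightarrow> nat \<Rightarrow> 'a set" where
  "skew_span K z e = {\<Sum>j<e. g j * z ^ j | g. \<forall>j. g j \<in> K}"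

lemma mem_skew_span_iff:
  "s \<in> skew_span K z e \<longleftrightarrow> (\<exists>g. (\<forall>j. g j \<in> K) \<and> s = (\<Sum>j<e. g j * z ^ j))"
  unfolding skew_span_def by blast

lemma finite_skew_span: "finite K \<Longrightarrow> finite (skew_span K z e)"
proof -
  assume "finite K"
  have "skew_span K z e \<subseteq> (\<lambda>g. \<Sum>j<e. g j * z ^ j) ` (PiE {..<e} (\<lambda>_. K))"
  proof
    fix s assume "s \<in> skew_span K z e"
    then obtain g where g: "\<forall>j. g j \<in> K" "s = (\<Sum>j<e. g j * z ^ j)"
      unfolding mem_skew_span_iff by blast
    then have "s = (\<Sum>j<e. restrict g {..<e} j * z ^ j)" by simp
    then show "s \<in> (\<lambda>g. \<Sum>j<e. g j * z ^ j) ` (PiE {..<e} (\<lambda>_. K))"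
      by (rule image_eqI[where x = "restrict g {..<e}"]) (use g(1) in auto)
  qed
  moreover have "finite (PiE {..<e} (\<lambda>_. K))"
    using \<open>finite K\<close> by (intro finite_PiE) auto
  ultimately show ?thesis
    by (rule finite_subset[OF _ finite_imageI])
qed

context
  fixes K :: "'a::division_ring set" and z :: 'a and e :: nat
  assumes K: "is_subring K" and z: "0 < e" "z ^ e = 1"
    and normalizes: "\<And>k. k \<in> K \<Longrightarrow> \<exists>k'\<in>K. z * k = k' * z"
begin

private lemma normalizes_power: "k \<in> K \<Longrightarrow> \<exists>k'\<in>K. z ^ i * k = k' * z ^ i"
proof (induction i arbitrary: k)
  case (Suc i)
  obtain k' where "k' \<in> K" "z * k = k' * z" using normalizes[OF Suc.prems] by blast
  obtain k'' where "k'' \<in> K" "z ^ i * k' = k'' * z ^ i" using Suc.IH[OF \<open>k' \<in> K\<close>] by blast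
  have "z ^ Suc i * k = z ^ i * (z * k)"
    by (simp only: power_Suc2 mult.assoc)
  also have "\<dots> = (z ^ i * k') * z"
    using \<open>z * k = k' * z\<close> by (simp only: mult.assoc)
  also have "\<dots> = k'' * z ^ Suc i"
    using \<open>z ^ i * k' = k'' * z ^ i\<close> by (simp only: power_Suc2 mult.assoc)
  finally show ?case using \<open>k'' \<in> K\<close> by blast
qed simp

lemma monomial_mem_skew_span:
  assumes "k \<in> K"
  shows "k * z ^ l \<in> skew_span K z e"
proof -
  have "z ^ l = z ^ (e * (l div e) + l mod e)" by simp
  also have "\<dots> = (z ^ e) ^ (l div e) * z ^ (l mod e)" by (simp only: power_add power_mult)
  finally have "z ^ l = z ^ (l mod e)" using z(2) by simp
  moreover have "(\<Sum>j<e. (if j = l mod e then k else 0) * z ^ j) = (\<Sum>j<e. if j = l mod e then k * z ^ j else 0)"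
    by (intro sum.cong) auto
  ultimately have "k * z ^ l = (\<Sum>j<e. (if j = l mod e then k else 0) * z ^ j)"
    using z(1) by simp
  then show ?thesis
    unfolding mem_skew_span_iff using assms subring_zero[OF K]
    by (intro exI[of _ "\<lambda>j. if j = l mod e then k else 0"]) auto
qed

private lemma add_mem_skew_span:
  assumes "s \<in> skew_span K z e" "t \<in> skew_span K z e"
  shows "s + t \<in> skew_span K z e"
proof -
  obtain g h where "\<forall>j. g j \<in> K" "\<forall>j. h j \<in> K" "s = (\<Sum>j<e. g j * z ^ j)" "t = (\<Sum>j<e. h j * z ^ j)"
    using assms unfolding mem_skew_span_iff by blast
  then show ?thesis
    unfolding mem_skew_span_iff using subring_add[OF K]
    by (intro exI[of _ "\<lambda>j. g j + h j"]) (simp add: sum.distrib distrib_right)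
qed

private lemma sum_mem_skew_span:
  "finite I \<Longrightarrow> (\<And>i. i \<in> I \<Longrightarrow> f i \<in> skew_span K z e) \<Longrightarrow> (\<Sum>i\<in>I. f i) \<in> skew_span K z e"
  by (induction I rule: finite_induct)
    (use monomial_mem_skew_span[of 0 0] subring_zero[OF K] add_mem_skew_span in auto)

lemma subring_skew_span: "is_subring (skew_span K z e)"
  unfolding is_subring_def
proof (intro conjI ballI)
  show "0 \<in> skew_span K z e" "1 \<in> skew_span K z e"
    using monomial_mem_skew_span[of 0 0] monomial_mem_skew_span[of 1 0] subring_zero[OF K] subring_one[OF K]
    by simp_all
  fix s t assume st: "s \<in> skew_span K z e" "t \<in> skew_span K z e"
  then show "s + t \<in> skew_span K z e" by (rule add_mem_skew_span)
  obtain g h where g: "\<forall>j. g j \<in> K" "s = (\<Sum>j<e. g j * z ^ j)"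
    and h: "\<forall>j. h j \<in> K" "t = (\<Sum>j<e. h j * z ^ j)"
    using st unfolding mem_skew_span_iff by blast
  have "(g i * z ^ i) * (h j * z ^ j) \<in> skew_span K z e" for i j
  proof -
    obtain k' where "k' \<in> K" "z ^ i * h j = k' * z ^ i"
      using normalizes_power h(1) by blast
    then have "(g i * z ^ i) * (h j * z ^ j) = (g i * k') * z ^ (i + j)"
      by (simp add: mult.assoc power_add flip: mult.assoc[of "z ^ i"])
    then show ?thesis
      using monomial_mem_skew_span subring_mult[OF K] g(1) \<open>k' \<in> K\<close> by simp
  qed
  then show "s * t \<in> skew_span K z e"
    unfolding g(2) h(2) sum_product by (intro sum_mem_skew_span) auto
next
  fix s assume "s \<in> skew_span K z e"
  then obtain g where "\<forall>j. g j \<in> K" "s = (\<Sum>j<e. g j * z ^ j)"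
    unfolding mem_skew_span_iff by blast
  then show "- s \<in> skew_span K z e"
    unfolding mem_skew_span_iff using subring_uminus[OF K]
    by (intro exI[of _ "\<lambda>j. - g j"]) (simp add: sum_negf)
qed

end

locale division_algebra_map = algebra_map \<phi> for \<phi> :: "'f::field \<Rightarrow> 'r::division_ring"
begin

text \<open>For noncommuting \<open>x, y\<close>, Herstein's lemma gives
  \<open>z x z\<inverse> = c \<in> F[x] - {x}\<close>; then \<open>F[x]\<close> and \<open>z\<close> generate a finite division subring,
  which is commutative by Wedderburn's theorem.\<close>
theorem commute_if_poly_identity:
  fixes x y :: 'r
  assumes F: "finite (UNIV :: 'f set)" and q: "q \<noteq> 0" "\<And>x. poly_alg \<phi> q x = 0"
  shows "x * y = y * x"
proof (rule ccontr)
  assume xy: "x * y \<noteq> y * x"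
  have fin: "finite (adjoin \<phi> a)" for a
    using finite_adjoin[OF F q(1) q(2)] .
  obtain c z where c: "c \<in> adjoin \<phi> x" "c \<noteq> x" and z: "z \<noteq> 0" "z * x = c * z"
    using exists_conjugate_in_finite_subring[OF subring_adjoin fin mem_adjoin_self xy] .
  define e where "e = card (adjoin \<phi> z) - 1"
  have e: "0 < e" "z ^ e = 1"
    using card_subring_ge_two[OF subring_adjoin fin, of z]
      power_card_minus_one[OF subring_adjoin fin mem_adjoin_self z(1)] by (simp_all add: e_def)
  have normalizes: "\<exists>k'\<in>adjoin \<phi> x. z * k = k' * z" if "k \<in> adjoin \<phi> x" for k
    using adjoin_intertwine[OF z(2) c(1) that] by blast
  let ?S = "skew_span (adjoin \<phi> x) z e"
  have "x \<in> ?S" "z \<in> ?S"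
    using monomial_mem_skew_span[where K = "adjoin \<phi> x" and k = x and l = 0, OF subring_adjoin e]
      monomial_mem_skew_span[where K = "adjoin \<phi> x" and k = 1 and l = 1, OF subring_adjoin e]
      normalizes mem_adjoin_self[of x] subring_one[OF subring_adjoin, of x] by auto
  moreover have "is_subring ?S" "finite ?S"
    using subring_skew_span[where K = "adjoin \<phi> x", OF subring_adjoin e] normalizes finite_skew_span[OF fin]
    by blast+
  ultimately have "x * z = z * x"
    by (intro finite_subring_commute)
  then have "x * z = c * z" using z(2) by simp
  then show False using c(2) z(1) by simp
qed

lemma exists_poly_alg_nonzero:
  assumes noncomm: "\<exists>a b :: 'r. a * b \<noteq> b * a" and q: "q \<noteq> 0"
  obtains x where "poly_alg \<phi> q x \<noteq> 0"
proof (cases "finite (UNIV :: 'f set)")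
  case True
  then show thesis
    using commute_if_poly_identity[OF True q] noncomm that by blast
next
  case False
  then obtain a where "poly q a \<noteq> 0"
    using poly_roots_finite[OF q] ex_new_if_finite by blast
  then show thesis
    using that[of "\<phi> a"] by (simp add: poly_alg_hom)
qed

end

section \<open>Traces of polynomials in rank one matrices\<close>

lemma mat_trace_add:
  "X \<in> carrier_mat n n \<Longrightarrow> Y \<in> carrier_mat n n \<Longrightarrow> mat_trace (X + Y) = mat_trace X + mat_trace Y"
  unfolding mat_trace_def by (simp add: sum.distrib)

lemma mat_trace_minus:
  fixes X Y :: "'a::ab_group_add mat"
  shows "X \<in> carrier_mat n n \<Longrightarrow> Y \<in> carrier_mat n n \<Longrightarrow> mat_trace (X - Y) = mat_trace X - mat_trace Y"
  unfolding mat_trace_def by (simp add: sum_subtractf)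

lemma mat_trace_smult:
  fixes X :: "'a::semiring_0 mat"
  shows "X \<in> carrier_mat n n \<Longrightarrow> mat_trace (a \<cdot>\<^sub>m X) = a * mat_trace X"
  unfolding mat_trace_def by (simp add: sum_distrib_left)

lemma poly_mat_carrier_trace:
  fixes X :: "'r::ring_1 mat" and \<phi> :: "'f::field \<Rightarrow> 'r"
  assumes X: "X \<in> carrier_mat n n"
  shows "poly_mat \<phi> p X \<in> carrier_mat n n"
    "mat_trace (poly_mat \<phi> p X) = (\<Sum>i<Suc (degree p). \<phi> (poly.coeff p i) * mat_trace (X ^\<^sub>m i))"
proof -
  have "foldr (\<lambda>i M. \<phi> (poly.coeff p i) \<cdot>\<^sub>m (X ^\<^sub>m i) + M) is (0\<^sub>m n n) \<in> carrier_mat n n \<and>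
    mat_trace (foldr (\<lambda>i M. \<phi> (poly.coeff p i) \<cdot>\<^sub>m (X ^\<^sub>m i) + M) is (0\<^sub>m n n))
      = (\<Sum>i\<leftarrow>is. \<phi> (poly.coeff p i) * mat_trace (X ^\<^sub>m i))" for "is"
  proof (induction "is")
    case (Cons i "is")
    let ?M = "foldr (\<lambda>i M. \<phi> (poly.coeff p i) \<cdot>\<^sub>m (X ^\<^sub>m i) + M) is (0\<^sub>m n n)"
    have "\<phi> (poly.coeff p i) \<cdot>\<^sub>m (X ^\<^sub>m i) \<in> carrier_mat n n" "?M \<in> carrier_mat n n"
      using X Cons.IH by simp_all
    then show ?case
      using Cons.IH by (simp add: mat_trace_add[of _ n] mat_trace_smult[of _ n] X)
  qed (simp add: mat_trace_def)
  from this[of "[0..<Suc (degree p)]"] X show "poly_mat \<phi> p X \<in> carrier_mat n n"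
    "mat_trace (poly_mat \<phi> p X) = (\<Sum>i<Suc (degree p). \<phi> (poly.coeff p i) * mat_trace (X ^\<^sub>m i))"
    unfolding poly_mat_def by (simp_all add: sum_list_distinct_conv_sum_set atLeast0LessThan)
qed

definition corner_mat :: "nat \<Rightarrow> 'a::zero \<Rightarrow> 'a mat" where
  "corner_mat n t = mat n n (\<lambda>(i, j). if i = 0 \<and> j = 0 then t else 0)"

definition outer_mat :: "nat \<Rightarrow> (nat \<Rightarrow> 'a::semiring_0) \<Rightarrow> 'a \<Rightarrow> (nat \<Rightarrow> 'a) \<Rightarrow> 'a mat" where
  "outer_mat n \<beta> w \<alpha> = mat n n (\<lambda>(i, j). \<beta> i * w * \<alpha> j)"

lemma corner_mat_mult:
  fixes t u :: "'a::semiring_0"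
  assumes "n > 0"
  shows "corner_mat n t * corner_mat n u = corner_mat n (t * u)"
proof (rule eq_matI)
  fix i j assume "i < dim_row (corner_mat n (t * u))" "j < dim_col (corner_mat n (t * u))"
  then have ij: "i < n" "j < n" by (simp_all add: corner_mat_def)
  have "(corner_mat n t * corner_mat n u) $$ (i, j)
      = (\<Sum>l<n. (if i = 0 \<and> l = 0 then t else 0) * (if l = 0 \<and> j = 0 then u else 0))"
    using ij by (simp add: corner_mat_def scalar_prod_def atLeast0LessThan)
  also have "\<dots> = (\<Sum>l<n. if l = 0 then (if i = 0 \<and> j = 0 then t * u else 0) else 0)"
    by (intro sum.cong) auto
  finally show "(corner_mat n t * corner_mat n u) $$ (i, j) = corner_mat n (t * u) $$ (i, j)"
    using ij assms by (simp add: corner_mat_def)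
qed (simp_all add: corner_mat_def)

lemma outer_mat_mult:
  "outer_mat n \<beta> w \<alpha> * outer_mat n \<beta> v \<alpha> = outer_mat n \<beta> (w * (\<Sum>l<n. \<alpha> l * \<beta> l) * v) \<alpha>"
proof (rule eq_matI)
  fix i j assume "i < dim_row (outer_mat n \<beta> (w * (\<Sum>l<n. \<alpha> l * \<beta> l) * v) \<alpha>)"
    "j < dim_col (outer_mat n \<beta> (w * (\<Sum>l<n. \<alpha> l * \<beta> l) * v) \<alpha>)"
  then have ij: "i < n" "j < n" by (simp_all add: outer_mat_def)
  have "(outer_mat n \<beta> w \<alpha> * outer_mat n \<beta> v \<alpha>) $$ (i, j) = (\<Sum>l<n. (\<beta> i * w * \<alpha> l) * (\<beta> l * v * \<alpha> j))"
    using ij by (simp add: outer_mat_def scalar_prod_def atLeast0LessThan)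
  also have "\<dots> = \<beta> i * (w * (\<Sum>l<n. \<alpha> l * \<beta> l) * v) * \<alpha> j"
    by (simp add: sum_distrib_left sum_distrib_right mult.assoc)
  finally show "(outer_mat n \<beta> w \<alpha> * outer_mat n \<beta> v \<alpha>) $$ (i, j)
      = outer_mat n \<beta> (w * (\<Sum>l<n. \<alpha> l * \<beta> l) * v) \<alpha> $$ (i, j)"
    using ij by (simp add: outer_mat_def)
qed (simp_all add: outer_mat_def)

lemma mat_trace_power_corner_mat:
  fixes t :: "'a::{semiring_1, comm_monoid_add}"
  assumes "n > 0"
  shows "mat_trace (corner_mat n t ^\<^sub>m Suc k) = t ^ Suc k"
proof -
  have "corner_mat n t ^\<^sub>m Suc k = corner_mat n (t ^ Suc k)"
  proof (induction k)
    case 0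
    have "corner_mat n t \<in> carrier_mat n n" by (simp add: corner_mat_def)
    then show ?case by simp
  next
    case (Suc k)
    have "corner_mat n t ^\<^sub>m Suc (Suc k) = corner_mat n t ^\<^sub>m Suc k * corner_mat n t"
      by (rule pow_mat.simps(2))
    also have "\<dots> = corner_mat n (t ^ Suc k) * corner_mat n t"
      by (simp only: Suc.IH)
    finally show ?case
      by (simp only: corner_mat_mult[OF assms] power_Suc2[of t "Suc k"])
  qed
  then show ?thesis
    using assms by (simp add: mat_trace_def corner_mat_def)
qed

lemma mat_trace_power_outer_mat:
  "mat_trace (outer_mat n \<beta> 1 \<alpha> ^\<^sub>m Suc k) = (\<Sum>l<n. \<beta> l * (\<Sum>l<n. \<alpha> l * \<beta> l) ^ k * \<alpha> l)"
proof -
  have "outer_mat n \<beta> 1 \<alpha> ^\<^sub>m Suc k = outer_mat n \<beta> ((\<Sum>l<n. \<alpha> l * \<beta> l) ^ k) \<alpha>"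
  proof (induction k)
    case 0
    have "outer_mat n \<beta> 1 \<alpha> \<in> carrier_mat n n" by (simp add: outer_mat_def)
    then show ?case by simp
  next
    case (Suc k)
    have "outer_mat n \<beta> 1 \<alpha> ^\<^sub>m Suc (Suc k) = outer_mat n \<beta> 1 \<alpha> ^\<^sub>m Suc k * outer_mat n \<beta> 1 \<alpha>"
      by (rule pow_mat.simps(2))
    also have "\<dots> = outer_mat n \<beta> ((\<Sum>l<n. \<alpha> l * \<beta> l) ^ k) \<alpha> * outer_mat n \<beta> 1 \<alpha>"
      by (simp only: Suc.IH)
    finally show ?case
      by (simp only: outer_mat_mult mult_1_right power_Suc2)
  qed
  then show ?thesis
    by (simp add: mat_trace_def outer_mat_def)
qed

definition first_row_mat :: "nat \<Rightarrow> (nat \<Rightarrow> 'a::zero) \<Rightarrow> 'a mat" where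
  "first_row_mat n \<alpha> = mat n n (\<lambda>(i, j). if i = 0 then \<alpha> j else 0)"

definition first_col_mat :: "nat \<Rightarrow> (nat \<Rightarrow> 'a::zero) \<Rightarrow> 'a mat" where
  "first_col_mat n \<beta> = mat n n (\<lambda>(i, j). if j = 0 then \<beta> i else 0)"

lemma first_row_mat_mult_first_col_mat:
  fixes \<alpha> \<beta> :: "nat \<Rightarrow> 'a::semiring_0"
  shows "first_row_mat n \<alpha> * first_col_mat n \<beta> = corner_mat n (\<Sum>l<n. \<alpha> l * \<beta> l)"
  by (rule eq_matI)
    (auto simp: first_row_mat_def first_col_mat_def corner_mat_def scalar_prod_def atLeast0LessThan)

lemma first_col_mat_mult_first_row_mat:
  fixes \<alpha> \<beta> :: "nat \<Rightarrow> 'a::semiring_1"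
  assumes "n > 0"
  shows "first_col_mat n \<beta> * first_row_mat n \<alpha> = outer_mat n \<beta> 1 \<alpha>"
proof (rule eq_matI)
  fix i j assume "i < dim_row (outer_mat n \<beta> 1 \<alpha>)" "j < dim_col (outer_mat n \<beta> 1 \<alpha>)"
  then have ij: "i < n" "j < n" by (simp_all add: outer_mat_def)
  have "(first_col_mat n \<beta> * first_row_mat n \<alpha>) $$ (i, j)
      = (\<Sum>l<n. (if l = 0 then \<beta> i else 0) * (if l = 0 then \<alpha> j else 0))"
    using ij by (simp add: first_row_mat_def first_col_mat_def scalar_prod_def atLeast0LessThan)
  also have "\<dots> = (\<Sum>l<n. if l = 0 then \<beta> i * \<alpha> j else 0)"
    by (intro sum.cong) auto
  finally show "(first_col_mat n \<beta> * first_row_mat n \<alpha>) $$ (i, j) = outer_mat n \<beta> 1 \<alpha> $$ (i, j)"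
    using ij assms by (simp add: outer_mat_def)
qed (simp_all add: outer_mat_def first_row_mat_def first_col_mat_def)

lemma mat_trace_poly_mat_bound:
  fixes X :: "'r::ring_1 mat" and \<phi> :: "'f::field \<Rightarrow> 'r"
  assumes "is_algebra_map \<phi>" "X \<in> carrier_mat n n" "degree p < N"
  shows "mat_trace (poly_mat \<phi> p X) = (\<Sum>i<N. \<phi> (poly.coeff p i) * mat_trace (X ^\<^sub>m i))"
proof -
  interpret algebra_map \<phi> by unfold_locales (rule assms(1))
  show ?thesis
    unfolding poly_mat_carrier_trace(2)[OF assms(2)] using assms(3)
    by (intro sum.mono_neutral_left) (auto simp: Polynomial.coeff_eq_0)
qed

context algebra_map
begin

lemma mat_trace_poly_mat_rank_one:
  fixes \<alpha> \<beta> :: "nat \<Rightarrow> 'r"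
  assumes n: "n > 0"
  defines "A \<equiv> first_row_mat n \<alpha>" and "B \<equiv> first_col_mat n \<beta>" and "s \<equiv> \<Sum>l<n. \<alpha> l * \<beta> l"
  shows "mat_trace (poly_mat \<phi> (pCons c g) (A * B) - poly_mat \<phi> (pCons c g) (B * A))
    = poly_alg \<phi> g s * s - (\<Sum>l<n. \<beta> l * poly_alg \<phi> g s * \<alpha> l)"
proof -
  define M where "M = Suc (degree g)"
  have AB: "A * B = corner_mat n s" "A * B \<in> carrier_mat n n"
    unfolding A_def B_def s_def first_row_mat_mult_first_col_mat by (simp_all add: corner_mat_def)
  have BA: "B * A = outer_mat n \<beta> 1 \<alpha>" "B * A \<in> carrier_mat n n"
    unfolding A_def B_def first_col_mat_mult_first_row_mat[OF n] by (simp_all add: outer_mat_def)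
  have deg: "degree (pCons c g) < Suc M"
    by (simp add: M_def degree_pCons_le le_imp_less_Suc)
  have trace: "mat_trace (poly_mat \<phi> (pCons c g) X)
      = \<phi> c * mat_trace (X ^\<^sub>m 0) + (\<Sum>i<M. \<phi> (poly.coeff g i) * mat_trace (X ^\<^sub>m Suc i))"
    if "X \<in> carrier_mat n n" for X
    unfolding mat_trace_poly_mat_bound[OF is_algebra_map that deg] by (subst sum.lessThan_Suc_shift) simp
  have one: "mat_trace (X ^\<^sub>m 0) = of_nat n" if "X \<in> carrier_mat n n" for X :: "'r mat"
    using that by (simp add: mat_trace_def)
  have "mat_trace (poly_mat \<phi> (pCons c g) (A * B)) = \<phi> c * of_nat n + (\<Sum>i<M. \<phi> (poly.coeff g i) * s ^ Suc i)"
    using trace[OF AB(2)] one[OF AB(2)] by (simp only: AB(1) mat_trace_power_corner_mat[OF n])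
  moreover have "mat_trace (poly_mat \<phi> (pCons c g) (B * A))
      = \<phi> c * of_nat n + (\<Sum>i<M. \<phi> (poly.coeff g i) * (\<Sum>l<n. \<beta> l * s ^ i * \<alpha> l))"
    using trace[OF BA(2)] one[OF BA(2)] by (simp only: BA(1) mat_trace_power_outer_mat s_def)
  ultimately have "mat_trace (poly_mat \<phi> (pCons c g) (A * B) - poly_mat \<phi> (pCons c g) (B * A))
      = (\<Sum>i<M. \<phi> (poly.coeff g i) * s ^ Suc i)
        - (\<Sum>i<M. \<phi> (poly.coeff g i) * (\<Sum>l<n. \<beta> l * s ^ i * \<alpha> l))"
    by (simp add: mat_trace_minus[OF poly_mat_carrier_trace(1)[OF AB(2)] poly_mat_carrier_trace(1)[OF BA(2)]])
  also have "(\<Sum>i<M. \<phi> (poly.coeff g i) * s ^ Suc i) = poly_alg \<phi> g s * s"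
    unfolding poly_alg_bound[of g M s, OF lessI[of "degree g", folded M_def]] sum_distrib_right
    by (simp add: mult.assoc power_Suc2 del: power_Suc)
  also have "(\<Sum>i<M. \<phi> (poly.coeff g i) * (\<Sum>l<n. \<beta> l * s ^ i * \<alpha> l))
      = (\<Sum>l<n. \<beta> l * poly_alg \<phi> g s * \<alpha> l)"
    unfolding poly_alg_bound[of g M s, OF lessI[of "degree g", folded M_def]]
      sum_distrib_left sum_distrib_right
    by (subst sum.swap) (simp add: hom_central_left mult.assoc)
  finally show ?thesis .
qed

end

lemma sum_lessThan_supported_01:
  fixes f :: "nat \<Rightarrow> 'a::comm_monoid_add"
  assumes "n \<ge> 2" "\<And>l. l \<ge> 2 \<Longrightarrow> f l = 0"
  shows "(\<Sum>l<n. f l) = f 0 + f 1"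
proof -
  have "(\<Sum>l<n. f l) = (\<Sum>l\<in>{0, 1}. f l)"
    using assms by (intro sum.mono_neutral_right) auto
  then show ?thesis by simp
qed

lemma rank_one_commutator_witness:
  fixes u v w x :: "'a::division_ring"
  assumes w: "w \<noteq> 0" "x * w = w * x" and n: "n \<ge> 2"
  obtains \<alpha> \<beta> :: "nat \<Rightarrow> 'a"
  where "(\<Sum>l<n. \<alpha> l * \<beta> l) = x" "w * x - (\<Sum>l<n. \<beta> l * w * \<alpha> l) = u * v - v * u"
proof -
  define \<alpha> where "\<alpha> l = (if l = 0 then 1 else if l = 1 then u else 0)" for l :: nat
  define \<beta> where "\<beta> l = (if l = 0 then x - u * v * inverse w else if l = 1 then v * inverse w else 0)"
    for l :: nat
  have "(\<Sum>l<n. \<alpha> l * \<beta> l) = x"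
    using n by (subst sum_lessThan_supported_01) (simp_all add: \<alpha>_def \<beta>_def mult.assoc)
  moreover have "w * x - (\<Sum>l<n. \<beta> l * w * \<alpha> l) = u * v - v * u"
    using n w by (subst sum_lessThan_supported_01) (simp_all add: \<alpha>_def \<beta>_def algebra_simps mult.assoc)
  ultimately show thesis
    using that by blast
qed

theorem theorem3p1:
  fixes \<phi> :: "'f::field \<Rightarrow> 'r::division_ring"
    and n :: nat
    and p :: "'f poly"
  assumes "is_algebra_map \<phi>"
    and "\<exists>a b :: 'r. a * b \<noteq> b * a"
    and "n \<ge> 2"
    and "degree p \<ge> 1"
  shows "\<exists>A \<in> carrier_mat n n. \<exists>B \<in> carrier_mat n n.
           mat_trace (poly_mat \<phi> p (A * B) - poly_mat \<phi> p (B * A)) \<noteq> 0"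
proof -
  interpret division_algebra_map \<phi>
    by unfold_locales (rule assms(1))
  obtain c g where p: "p = pCons c g" and "g \<noteq> 0"
    using assms(4) by (cases p) (auto split: if_splits)
  obtain x where w: "poly_alg \<phi> g x \<noteq> 0"
    using exists_poly_alg_nonzero[OF assms(2) \<open>g \<noteq> 0\<close>] .
  obtain u v :: 'r where uv: "u * v \<noteq> v * u"
    using assms(2) by blast
  have "x * poly_alg \<phi> g x = poly_alg \<phi> g x * x"
    using poly_alg_intertwine[of x x x g] by simp
  then obtain \<alpha> \<beta> where "(\<Sum>l<n. \<alpha> l * \<beta> l) = x"
    "poly_alg \<phi> g x * x - (\<Sum>l<n. \<beta> l * poly_alg \<phi> g x * \<alpha> l) = u * v - v * u"
    using rank_one_commutator_witness[OF w _ assms(3)] by blast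
  then have "mat_trace (poly_mat \<phi> p (first_row_mat n \<alpha> * first_col_mat n \<beta>)
      - poly_mat \<phi> p (first_col_mat n \<beta> * first_row_mat n \<alpha>)) = u * v - v * u"
    using mat_trace_poly_mat_rank_one[where n = n and \<alpha> = \<alpha> and \<beta> = \<beta> and c = c and g = g] assms(3)
    by (simp add: p)
  then show ?thesis
    using uv by (intro bexI[of _ "first_row_mat n \<alpha>"] bexI[of _ "first_col_mat n \<beta>"])
      (simp_all add: first_row_mat_def first_col_mat_def)
qed

end
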